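(* Let $L>n\ge 0$ and let $q(x)\in\mathrm{GF}(2)[x]/(x^L+1)$ be nonzero, represented as a polynomial of degree exactly $n$. Fix any set $S$ of $n$ bit positions that are consecutive modulo $L$, i.e. $S=\{k \bmod L, (k+1)\bmod L,\dots,(k+n-1)\bmod L\}$ for some integer $k$. Then for every $y\in\mathrm{GF}(2)[x]/(x^L+1)$, the number of $w\in\mathrm{GF}(2)[x]/(x^L+1)$ such that $q(x)w\bmod (x^L+1)$ and $y$ agree in every bit position outside $S$ is exactly $2^n$. (In particular this holds for $S=\{0,1,\dots,n-1\}$, the first $n$ bits.)
   Context: Elements of $\mathrm{GF}(2)[x]/(x^L+1)$ are identified with polynomials $\sum_{i=0}^{L-1}c_ix^i$ over $\mathrm{GF}(2)$; bit position $i$ refers to the coefficient $c_i$ of $x^i$. Two elements are "equal modulo the positions in $S$" if their coefficients agree at every position not in $S$. *)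

theory Defs
  imports "HOL-Library.Z2" "HOL-Computational_Algebra.Polynomial"
begin

text \<open>GF(2) is the type bit. Elements of GF(2)[x]/(x^L+1) are represented by
  their canonical representatives: polynomials over GF(2) of degree < L.\<close>

definition cyc_modulus :: "nat \<Rightarrow> bit poly" where
  "cyc_modulus L = monom 1 L + 1"

definition cyc_elems :: "nat \<Rightarrow> bit poly set" where
  "cyc_elems L = {p. degree p < L}"

definition cyc_mult :: "nat \<Rightarrow> bit poly \<Rightarrow> bit poly \<Rightarrow> bit poly" where
  "cyc_mult L a b = (a * b) mod cyc_modulus L"

definition eq_outside :: "nat \<Rightarrow> nat set \<Rightarrow> bit poly \<Rightarrow> bit poly \<Rightarrow> bool" where
  "eq_outside L S a b \<longleftrightarrow> (\<forall>i<L. i \<notin> S \<longrightarrow> coeff a i = coeff b i)"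

definition consec_positions :: "nat \<Rightarrow> int \<Rightarrow> nat \<Rightarrow> nat set" where
  "consec_positions L k n = (\<lambda>j. nat ((k + int j) mod int L)) ` {0..<n}"

end

theory Submission
  imports Defs
begin

(* Multiplication by x^s modulo x^L+1 (the cyclic shift  cyc_shift L s) is
   a bijection of GF(2)[x]/(x^L+1) that commutes with multiplication by q and rotates the
   bit positions; choosing s suitably it moves the window S of consecutive positions onto
   the initial window {0,...,n-1}.  So it suffices to count the w for which q*w and y agree
   at the positions n,...,L-1.  Reading off these L-n positions of q*w is an additive map
   f from the 2^L elements to the 2^(L-n) polynomials with all coefficients below L-n.
   It is surjective: on polynomials u of degree < L-n we have q*u of degree < L, and the
   top coefficient of q*u lies at a position >= n, so f is injective, hence bijective,
   there.  Every fibre of a surjective additive map has the size of the kernel, which is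
   therefore 2^L / 2^(L-n) = 2^n. *)

text \<open>A nonempty fibre of an additive map on a subgroup is a translate of the kernel.\<close>
lemma card_fibre_eq_kernel:
  fixes f :: "'a::ab_group_add \<Rightarrow> 'b::ab_group_add"
  assumes diff_closed: "\<And>x y. x \<in> A \<Longrightarrow> y \<in> A \<Longrightarrow> x - y \<in> A"
    and additive: "\<And>x y. x \<in> A \<Longrightarrow> y \<in> A \<Longrightarrow> f (x - y) = f x - f y"
    and b: "b \<in> f ` A"
  shows "card {x \<in> A. f x = b} = card {x \<in> A. f x = 0}"
proof -
  obtain a where a: "a \<in> A" "f a = b" using b by blast
  have add_closed: "x + a \<in> A" if "x \<in> A" for x
    using diff_closed[OF that diff_closed[OF diff_closed[OF a(1) a(1)] a(1)]] by simp
  have "bij_betw (\<lambda>x. x - a) {x \<in> A. f x = b} {x \<in> A. f x = 0}"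
  proof (rule bij_betw_byWitness[where f' = "\<lambda>x. x + a"])
    show "(\<lambda>x. x - a) ` {x \<in> A. f x = b} \<subseteq> {x \<in> A. f x = 0}"
      using a diff_closed additive by auto
    show "(\<lambda>x. x + a) ` {x \<in> A. f x = 0} \<subseteq> {x \<in> A. f x = b}"
      using a add_closed additive[of _ a] by (fastforce simp: eq_diff_eq)
  qed auto
  then show ?thesis by (rule bij_betw_same_card)
qed

lemma card_domain_eq_image_times_kernel:
  fixes f :: "'a::ab_group_add \<Rightarrow> 'b::ab_group_add"
  assumes "finite A"
    and diff_closed: "\<And>x y. x \<in> A \<Longrightarrow> y \<in> A \<Longrightarrow> x - y \<in> A"
    and additive: "\<And>x y. x \<in> A \<Longrightarrow> y \<in> A \<Longrightarrow> f (x - y) = f x - f y"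
  shows "card A = card (f ` A) * card {x \<in> A. f x = 0}"
proof -
  have "card A = (\<Sum>_\<in>A. 1::nat)" by simp
  also have "\<dots> = (\<Sum>b\<in>f ` A. \<Sum>_\<in>{x \<in> A. f x = b}. 1)"
    by (rule sum.image_gen[OF \<open>finite A\<close>])
  also have "\<dots> = (\<Sum>b\<in>f ` A. card {x \<in> A. f x = 0})"
    using card_fibre_eq_kernel[OF diff_closed additive] by (intro sum.cong) auto
  finally show ?thesis by simp
qed

lemma card_Collect_bij_betw:
  assumes "bij_betw g A A" and "\<And>x. x \<in> A \<Longrightarrow> P x \<longleftrightarrow> Q (g x)"
  shows "card {x \<in> A. P x} = card {x \<in> A. Q x}"
proof -
  have "g ` {x \<in> A. P x} = {x \<in> A. Q x}"
  proof
    show "g ` {x \<in> A. P x} \<subseteq> {x \<in> A. Q x}"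
      using assms bij_betwE by fastforce
    show "{x \<in> A. Q x} \<subseteq> g ` {x \<in> A. P x}"
    proof
      fix x assume x: "x \<in> {x \<in> A. Q x}"
      then obtain x' where "x' \<in> A" "x = g x'"
        using assms(1) unfolding bij_betw_def by blast
      then show "x \<in> g ` {x \<in> A. P x}" using x assms(2) by blast
    qed
  qed
  moreover have "inj_on g {x \<in> A. P x}"
    using assms(1) unfolding bij_betw_def by (auto intro: inj_on_subset)
  ultimately show ?thesis by (metis card_image)
qed

text \<open>Polynomials over GF(2) whose coefficients vanish from position N on; for N > 0
  these are exactly the polynomials of degree < N.\<close>
definition polys_below :: "nat \<Rightarrow> bit poly set" where
  "polys_below N = {p. \<forall>i\<ge>N. coeff p i = 0}"

lemma polys_below_diff: "p \<in> polys_below N \<Longrightarrow> p' \<in> polys_below N \<Longrightarrow> p - p' \<in> polys_below N"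
  by (simp add: polys_below_def)

lemma polys_below_mono: "N \<le> M \<Longrightarrow> polys_below N \<subseteq> polys_below M"
  by (auto simp: polys_below_def)

lemma degree_less_if_polys_below:
  assumes "p \<in> polys_below N" "p \<noteq> 0"
  shows "degree p < N"
proof (rule ccontr)
  assume "\<not> degree p < N"
  then have "lead_coeff p = 0" using assms(1) by (simp add: polys_below_def)
  then show False using assms(2) by simp
qed

lemma cyc_elems_eq_polys_below:
  assumes "0 < L"
  shows "cyc_elems L = polys_below L"
proof -
  have "degree p < L" if "\<forall>i\<ge>L. coeff p i = 0" for p :: "bit poly"
  proof -
    have "degree p \<le> L - 1" by (rule degree_le) (use that in auto)
    then show ?thesis using assms by linarith
  qed
  then show ?thesis
    unfolding cyc_elems_def polys_below_def by (auto simp: coeff_eq_0)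
qed

lemma UNIV_bit: "(UNIV :: bit set) = {0, 1}"
  by (auto intro: bit.exhaust)

text \<open>A polynomial in polys_below N is determined by its first N coefficients, and
  every choice of them occurs; hence there are 2^N such polynomials.\<close>
lemma card_polys_below: "card (polys_below N) = 2 ^ N"
proof -
  have "bij_betw (\<lambda>p. map (coeff p) [0..<N]) (polys_below N) {xs. length xs = N}"
  proof (rule bij_betw_byWitness[where f' = Poly])
    show "\<forall>p\<in>polys_below N. Poly (map (coeff p) [0..<N]) = p"
      by (auto simp: polys_below_def poly_eq_iff nth_default_def)
    show "\<forall>xs\<in>{xs. length xs = N}. map (coeff (Poly xs)) [0..<N] = xs"
      by (auto simp: nth_default_def intro!: nth_equalityI)
    show "Poly ` {xs. length xs = N} \<subseteq> polys_below N"
      by (auto simp: polys_below_def nth_default_def)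
  qed auto
  then have "card (polys_below N) = card {xs. set xs \<subseteq> (UNIV :: bit set) \<and> length xs = N}"
    by (simp add: bij_betw_same_card)
  moreover have "finite (UNIV :: bit set)" "card (UNIV :: bit set) = 2"
    by (simp_all add: UNIV_bit)
  ultimately show ?thesis using card_lists_length_eq by metis
qed

lemma finite_polys_below: "finite (polys_below N)"
  using card_polys_below[of N] by (metis card.infinite power_not_zero zero_neq_numeral)

lemma degree_cyc_modulus: "0 < L \<Longrightarrow> degree (cyc_modulus L) = L"
  unfolding cyc_modulus_def by (simp add: degree_add_eq_left degree_monom_eq)

lemma mod_cyc_modulus_in:
  assumes "0 < L"
  shows "p mod cyc_modulus L \<in> polys_below L"
proof -
  have "cyc_modulus L \<noteq> 0" using degree_cyc_modulus[OF assms] assms by auto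
  then have "p mod cyc_modulus L = 0 \<or> degree (p mod cyc_modulus L) < L"
    using degree_mod_less degree_cyc_modulus[OF assms] by metis
  then show ?thesis by (auto simp: polys_below_def coeff_eq_0)
qed

lemma mod_cyc_modulus_id:
  assumes "0 < L" "p \<in> polys_below L"
  shows "p mod cyc_modulus L = p"
proof (cases "p = 0")
  case False
  then have "degree p < degree (cyc_modulus L)"
    using assms degree_less_if_polys_below degree_cyc_modulus by simp
  then show ?thesis by (rule mod_poly_less)
qed simp

lemma cyc_mult_in: "0 < L \<Longrightarrow> cyc_mult L a b \<in> polys_below L"
  by (simp add: cyc_mult_def mod_cyc_modulus_in)

lemma cyc_mult_diff: "cyc_mult L q (a - b) = cyc_mult L q a - cyc_mult L q b"
  by (simp add: cyc_mult_def right_diff_distrib poly_mod_diff_left)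

text \<open>In characteristic 2 we have x^L = (x^L + 1) + 1, so x^L acts as 1 modulo x^L+1.\<close>
lemma monom_L_mod_cyc_modulus: "(monom 1 L * p) mod cyc_modulus L = p mod cyc_modulus L"
proof -
  have "(1::bit poly) + 1 = 0"
    by (rule poly_eqI) (simp only: coeff_add coeff_0, simp)
  then have "monom 1 L = cyc_modulus L + 1"
    by (simp add: cyc_modulus_def add.assoc)
  then have "monom 1 L * p = p + p * cyc_modulus L" by (simp add: algebra_simps)
  then show ?thesis by simp
qed

definition window :: "nat \<Rightarrow> nat \<Rightarrow> bit poly \<Rightarrow> bit poly" where
  "window n N p = poly_cutoff N (poly_shift n p)"

lemma coeff_window: "coeff (window n N p) j = (if j < N then coeff p (j + n) else 0)"
  by (simp add: window_def coeff_poly_cutoff coeff_poly_shift)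

lemma window_in: "window n N p \<in> polys_below N"
  by (simp add: polys_below_def coeff_window)

lemma window_diff: "window n N (p - p') = window n N p - window n N p'"
  by (rule poly_eqI) (simp add: coeff_window)

lemma eq_outside_initial_iff_window:
  assumes "n \<le> L"
  shows "eq_outside L {0..<n} a b \<longleftrightarrow> window n (L - n) a = window n (L - n) b"
proof -
  have "(\<forall>i<L. n \<le> i \<longrightarrow> coeff a i = coeff b i) \<longleftrightarrow>
      (\<forall>j<L - n. coeff a (j + n) = coeff b (j + n))"
  proof
    assume "\<forall>i<L. n \<le> i \<longrightarrow> coeff a i = coeff b i"
    then show "\<forall>j<L - n. coeff a (j + n) = coeff b (j + n)" by simp
  next
    assume top: "\<forall>j<L - n. coeff a (j + n) = coeff b (j + n)"
    show "\<forall>i<L. n \<le> i \<longrightarrow> coeff a i = coeff b i"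
    proof (intro allI impI)
      fix i assume "i < L" "n \<le> i"
      then show "coeff a i = coeff b i" using top[rule_format, of "i - n"] by simp
    qed
  qed
  then show ?thesis
    by (simp add: eq_outside_def poly_eq_iff coeff_window not_less)
qed

text \<open>If q has degree n and d has degree below L-n, then the leading coefficient of
  q*d sits inside the window of positions n..L-1; so that window vanishes only for d = 0.\<close>
lemma window_mult_eq_0:
  assumes "q \<noteq> 0" "degree q = n" "d \<in> polys_below (L - n)"
    and "window n (L - n) (q * d) = 0"
  shows "d = 0"
proof (rule ccontr)
  assume d: "d \<noteq> 0"
  then have "degree d < L - n" using assms(3) by (rule degree_less_if_polys_below[rotated])
  moreover have "coeff (q * d) (degree d + n) \<noteq> 0"
  proof -
    have "degree (q * d) = degree d + n" using assms(1,2) d by (simp add: degree_mult_eq)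
    moreover have "q * d \<noteq> 0" using assms(1) d by simp
    ultimately show ?thesis by (metis leading_coeff_0_iff)
  qed
  ultimately have "coeff (window n (L - n) (q * d)) (degree d) \<noteq> 0"
    by (simp add: coeff_window)
  then show False using assms(4) by simp
qed

text \<open>Reading the top window of q*w is surjective onto all L-n bit patterns: it is
  already bijective on the polynomials of degree below L-n.\<close>
lemma window_cyc_mult_surj:
  assumes "n < L" "q \<noteq> 0" "degree q = n"
  shows "(\<lambda>w. window n (L - n) (cyc_mult L q w)) ` polys_below L = polys_below (L - n)"
    (is "?f ` _ = ?B")
proof
  show "?f ` polys_below L \<subseteq> ?B" by (auto intro: window_in)
next
  have small_product: "cyc_mult L q u = q * u" if "u \<in> ?B" for u
  proof -
    have "q * u \<in> polys_below L"
    proof (cases "u = 0")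
      case False
      then have "degree (q * u) < L"
        using assms degree_less_if_polys_below[OF that False] by (simp add: degree_mult_eq)
      then show ?thesis by (auto simp: polys_below_def coeff_eq_0)
    qed (simp add: polys_below_def)
    then show ?thesis using assms(1) by (simp add: cyc_mult_def mod_cyc_modulus_id)
  qed
  have "inj_on ?f ?B"
  proof (rule inj_onI)
    fix u u' assume u: "u \<in> ?B" "u' \<in> ?B" "?f u = ?f u'"
    have "window n (L - n) (q * (u - u')) = 0"
      using u small_product by (simp add: right_diff_distrib window_diff)
    then show "u = u'"
      using window_mult_eq_0[OF assms(2,3) polys_below_diff[OF u(1,2)]] by simp
  qed
  moreover have "?f ` ?B \<subseteq> ?B" by (auto intro: window_in)
  ultimately have "?f ` ?B = ?B" by (intro endo_inj_surj finite_polys_below)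
  moreover have "?f ` ?B \<subseteq> ?f ` polys_below L"
    using polys_below_mono[of "L - n" L] by (intro image_mono) simp
  ultimately show "?B \<subseteq> ?f ` polys_below L" by simp
qed

lemma card_eq_outside_initial:
  assumes "n < L" "q \<noteq> 0" "degree q = n" "y \<in> polys_below L"
  shows "card {w \<in> polys_below L. eq_outside L {0..<n} (cyc_mult L q w) y} = 2 ^ n"
proof -
  define f where "f w = window n (L - n) (cyc_mult L q w)" for w
  have additive: "f (w - w') = f w - f w'" for w w'
    by (simp add: f_def cyc_mult_diff window_diff)
  have surj: "f ` polys_below L = polys_below (L - n)"
    unfolding f_def using window_cyc_mult_surj[OF assms(1-3)] .
  have y_window: "window n (L - n) (cyc_mult L q w) = window n (L - n) y \<longleftrightarrow>
      eq_outside L {0..<n} (cyc_mult L q w) y" for w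
    using eq_outside_initial_iff_window assms(1) by simp
  have "2 ^ L = 2 ^ (L - n) * card {w \<in> polys_below L. f w = 0}"
    using card_domain_eq_image_times_kernel[OF finite_polys_below polys_below_diff additive]
    by (simp add: surj card_polys_below)
  moreover have "(2::nat) ^ L = 2 ^ (L - n) * 2 ^ n"
    using assms(1) by (simp add: power_add[symmetric])
  ultimately have kernel: "card {w \<in> polys_below L. f w = 0} = 2 ^ n"
    by simp
  have "card {w \<in> polys_below L. f w = window n (L - n) y} = 2 ^ n"
    using card_fibre_eq_kernel[OF polys_below_diff additive] surj window_in kernel by simp
  then show ?thesis by (simp add: f_def y_window)
qed

definition cyc_shift :: "nat \<Rightarrow> nat \<Rightarrow> bit poly \<Rightarrow> bit poly" where
  "cyc_shift L s p = cyc_mult L (monom 1 s) p"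

lemma cyc_shift_cyc_mult: "cyc_shift L s (cyc_mult L q w) = cyc_mult L q (cyc_shift L s w)"
  by (simp add: cyc_shift_def cyc_mult_def mod_mult_right_eq ac_simps)

lemma cyc_shift_cyc_shift:
  assumes "0 < L" "s + s' = L" "p \<in> polys_below L"
  shows "cyc_shift L s (cyc_shift L s' p) = p"
proof -
  have "cyc_shift L s (cyc_shift L s' p) = (monom 1 L * p) mod cyc_modulus L"
    using assms(2)
    by (simp add: cyc_shift_def cyc_mult_def mod_mult_right_eq mult.assoc[symmetric] mult_monom)
  also have "\<dots> = p"
    using assms(1,3) by (simp add: monom_L_mod_cyc_modulus mod_cyc_modulus_id)
  finally show ?thesis .
qed

lemma bij_cyc_shift:
  assumes "0 < L" "s \<le> L"
  shows "bij_betw (cyc_shift L s) (polys_below L) (polys_below L)"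
proof (rule bij_betw_byWitness[where f' = "cyc_shift L (L - s)"])
  show "\<forall>p\<in>polys_below L. cyc_shift L (L - s) (cyc_shift L s p) = p"
    "\<forall>p\<in>polys_below L. cyc_shift L s (cyc_shift L (L - s) p) = p"
    using assms cyc_shift_cyc_shift by auto
qed (use assms in \<open>auto simp: cyc_shift_def cyc_mult_in\<close>)

text \<open>Writing p = c + x^(L-s) h with deg c < L-s gives x^s p = x^s c + x^L h, which is
  congruent to the representative x^s c + h: bit i of the result is bit i - s mod L of p.\<close>
lemma coeff_cyc_shift:
  assumes L: "0 < L" and s: "s \<le> L" and p: "p \<in> polys_below L" and i: "i < L"
  shows "coeff (cyc_shift L s p) i = coeff p ((i + (L - s)) mod L)"
proof -
  define c where "c = poly_cutoff (L - s) p"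
  define h where "h = poly_shift (L - s) p"
  have split: "p = c + monom 1 (L - s) * h"
    by (rule poly_eqI) (simp add: c_def h_def coeff_poly_cutoff coeff_poly_shift coeff_monom_mult)
  have "monom 1 s * p = monom 1 s * c + monom 1 L * h"
    using s by (subst split) (simp add: distrib_left mult.assoc[symmetric] mult_monom)
  moreover have "monom 1 s * c \<in> polys_below L" "h \<in> polys_below L"
    using s p by (auto simp: polys_below_def coeff_monom_mult c_def h_def coeff_poly_cutoff
        coeff_poly_shift)
  ultimately have shift: "cyc_shift L s p = monom 1 s * c + h"
    using L by (simp add: cyc_shift_def cyc_mult_def poly_mod_add_left
        monom_L_mod_cyc_modulus mod_cyc_modulus_id)
  show ?thesis
  proof (cases "i < s")
    case True
    then show ?thesis
      using s i by (simp add: shift coeff_monom_mult h_def coeff_poly_shift)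
  next
    case False
    then have "(i + (L - s)) mod L = i - s" "coeff p (i + (L - s)) = 0"
      using s i p by (simp_all add: mod_if polys_below_def)
    moreover have "i - s < L - s" using False i by linarith
    ultimately show ?thesis
      using False s i by (simp add: shift coeff_monom_mult h_def c_def coeff_poly_shift
          coeff_poly_cutoff)
  qed
qed

lemma consec_positions_eq:
  assumes "0 < L"
  shows "consec_positions L k n = (\<lambda>j. (nat (k mod int L) + j) mod L) ` {0..<n}"
proof -
  have "nat ((k + int j) mod int L) = (nat (k mod int L) + j) mod L" for j
  proof -
    have "(k + int j) mod int L = (k mod int L + int j) mod int L"
      by (simp add: mod_add_left_eq)
    also have "k mod int L = int (nat (k mod int L))" using assms by simp
    finally have "(k + int j) mod int L = int ((nat (k mod int L) + j) mod L)"
      by (simp add: of_nat_mod)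
    then show ?thesis by simp
  qed
  then show ?thesis unfolding consec_positions_def by simp
qed

lemma inj_on_add_mod: "inj_on (\<lambda>i. (r + i) mod L) {..<L::nat}"
proof -
  have "j = i" if "i < L" "j \<le> i" "(r + i) mod L = (r + j) mod L" for i j :: nat
  proof -
    have "L dvd (r + i) - (r + j)" using that by (simp add: mod_eq_dvd_iff_nat)
    then have "L dvd i - j" by simp
    then show "j = i" using that by (auto dest: dvd_imp_le)
  qed
  then show ?thesis by (intro inj_onI) (metis lessThan_iff nat_le_linear)
qed

lemma eq_outside_reindex:
  assumes onto: "\<sigma> ` {..<L} = {..<L}"
  shows "eq_outside L S a b \<longleftrightarrow> (\<forall>i<L. \<sigma> i \<notin> S \<longrightarrow> coeff a (\<sigma> i) = coeff b (\<sigma> i))"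
proof
  assume "eq_outside L S a b"
  moreover have "\<sigma> i < L" if "i < L" for i using onto that by auto
  ultimately show "\<forall>i<L. \<sigma> i \<notin> S \<longrightarrow> coeff a (\<sigma> i) = coeff b (\<sigma> i)"
    unfolding eq_outside_def by blast
next
  assume along: "\<forall>i<L. \<sigma> i \<notin> S \<longrightarrow> coeff a (\<sigma> i) = coeff b (\<sigma> i)"
  show "eq_outside L S a b"
    unfolding eq_outside_def
  proof (intro allI impI)
    fix j assume "j < L" "j \<notin> S"
    moreover have "j \<in> \<sigma> ` {..<L}" using onto \<open>j < L\<close> by simp
    then obtain i where "i < L" "j = \<sigma> i" by blast
    ultimately show "coeff a j = coeff b j" using along by blast
  qed
qed

lemma eq_outside_cyc_shift:
  assumes n: "n \<le> L" and r: "r < L" and a: "a \<in> polys_below L" and b: "b \<in> polys_below L"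
  shows "eq_outside L ((\<lambda>j. (r + j) mod L) ` {0..<n}) a b \<longleftrightarrow>
    eq_outside L {0..<n} (cyc_shift L (L - r) a) (cyc_shift L (L - r) b)"
proof -
  define \<sigma> where "\<sigma> i = (r + i) mod L" for i
  have inj: "inj_on \<sigma> {..<L}" unfolding \<sigma>_def by (rule inj_on_add_mod)
  then have onto: "\<sigma> ` {..<L} = {..<L}"
    using r by (intro endo_inj_surj) (auto simp: \<sigma>_def)
  have in_window: "\<sigma> i \<in> \<sigma> ` {0..<n} \<longleftrightarrow> i \<in> {0..<n}" if "i < L" for i
  proof (rule inj_on_image_mem_iff[OF inj])
    show "i \<in> {..<L}" "{0..<n} \<subseteq> {..<L}" using n that by auto
  qed
  have coeff_shift: "coeff (cyc_shift L (L - r) p) i = coeff p (\<sigma> i)"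
    if "p \<in> polys_below L" "i < L" for p i
    using coeff_cyc_shift[OF _ _ that] r by (simp add: \<sigma>_def add.commute)
  have "eq_outside L (\<sigma> ` {0..<n}) a b \<longleftrightarrow>
      (\<forall>i<L. \<sigma> i \<notin> \<sigma> ` {0..<n} \<longrightarrow> coeff a (\<sigma> i) = coeff b (\<sigma> i))"
    by (rule eq_outside_reindex[OF onto])
  also have "\<dots> \<longleftrightarrow> eq_outside L {0..<n} (cyc_shift L (L - r) a) (cyc_shift L (L - r) b)"
    unfolding eq_outside_def using in_window coeff_shift a b by auto
  finally show ?thesis by (simp add: \<sigma>_def)
qed

theorem mainTheorem6:
  fixes L n :: nat and k :: int and q y :: "bit poly"
  assumes "n < L"
    and "q \<in> cyc_elems L" and "q \<noteq> 0" and "degree q = n"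
    and "y \<in> cyc_elems L"
  shows "card {w \<in> cyc_elems L.
           eq_outside L (consec_positions L k n) (cyc_mult L q w) y} = 2 ^ n"
proof -
  have L: "0 < L" using assms(1) by simp
  define r where "r = nat (k mod int L)"
  have r: "r < L" using L by (simp add: r_def nat_less_iff)
  have elems: "cyc_elems L = polys_below L" using cyc_elems_eq_polys_below[OF L] .
  have y: "y \<in> polys_below L" using assms(5) elems by simp
  have shift_condition:
    "eq_outside L (consec_positions L k n) (cyc_mult L q w) y \<longleftrightarrow>
     eq_outside L {0..<n} (cyc_mult L q (cyc_shift L (L - r) w)) (cyc_shift L (L - r) y)"
    for w
    using eq_outside_cyc_shift[OF less_imp_le[OF assms(1)] r cyc_mult_in[OF L] y]
    by (simp add: consec_positions_eq[OF L] r_def cyc_shift_cyc_mult)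
  have "card {w \<in> cyc_elems L. eq_outside L (consec_positions L k n) (cyc_mult L q w) y} =
      card {w \<in> polys_below L. eq_outside L {0..<n} (cyc_mult L q w) (cyc_shift L (L - r) y)}"
    unfolding elems using shift_condition bij_cyc_shift[OF L, of "L - r"]
    by (intro card_Collect_bij_betw) auto
  also have "\<dots> = 2 ^ n"
    using card_eq_outside_initial[OF assms(1,3,4)] y L by (simp add: cyc_shift_def cyc_mult_in)
  finally show ?thesis .
qed

end
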